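(* Let $G$ be a graph without isolated vertices, let $F\subseteq\varphi(G)$, and let $Z$ be a nondeterministic read-once branching program representing $F$. Let $u$ be a node of $Z$ and let $M=\{\{x_1,y_1\},\dots,\{x_q,y_q\}\}$ be a matching of $G$ such that $\{x_1,\dots,x_q\}$ and $\{y_1,\dots,y_q\}$ are separated by $u$. Then there is a set $X$ of $q$ vertices of $G$ containing exactly one vertex of each $\{x_i,y_i\}$ such that for every source-sink path $P$ of $Z$ passing through $u$, $X\subseteq A(P)$ (i.e. every variable of $X$ occurs positively in $A(P)$).
   Context: $\varphi(G)$ is the CNF on variables $V(G)$ with clauses $(u\vee v)$ for $\{u,v\}\in E(G)$; Boolean functions are identified with their sets of satisfying assignments (sets of literals), and $F\subseteq\varphi(G)$ means every satisfying assignment of $F$ satisfies $\varphi(G)$. A nondeterministic read-once branching program (NROBP) over variable set $X$ is a directed acyclic graph with one source and one sink, some edges labelled by literals over $X$, such that each variable occurs on exactly one edge of every source-sink path; $A(P)$ is the set of literals labelling path $P$, and the NROBP represents the function whose satisfying assignments are the sets $A(P)$ over source-sink paths $P$. A variable $x$ is located before node $v$ if on every source-sink path through $v$, $x$ occurs on the prefix ending at $v$; it is located after $v$ if it occurs on the suffix starting at $v$ on every such path. Two sets $X,Y$ of variables are separated by $v$ if either all of $X$ are located before $v$ and all of $Y$ after $v$, or vice versa. *)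

theory Defs
  imports Main
begin

datatype 'a lit = Pos 'a | Neg 'a

fun var :: "'a lit \<Rightarrow> 'a" where
  "var (Pos x) = x" | "var (Neg x) = x"

definition graph :: "'a set \<Rightarrow> 'a set set \<Rightarrow> bool" where
  "graph V E \<longleftrightarrow> finite V \<and> (\<forall>e\<in>E. \<exists>a b. e = {a, b} \<and> a \<noteq> b \<and> a \<in> V \<and> b \<in> V)"

definition no_isolated :: "'a set \<Rightarrow> 'a set set \<Rightarrow> bool" where
  "no_isolated V E \<longleftrightarrow> (\<forall>v\<in>V. \<exists>e\<in>E. v \<in> e)"

definition assignment :: "'a set \<Rightarrow> 'a lit set \<Rightarrow> bool" where
  "assignment V S \<longleftrightarrow> var ` S \<subseteq> V \<and> (\<forall>v\<in>V. (Pos v \<in> S) \<noteq> (Neg v \<in> S))"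

text \<open>The monotone 2-CNF phi(G), as its set of satisfying assignments.\<close>
definition phi :: "'a set \<Rightarrow> 'a set set \<Rightarrow> 'a lit set set" where
  "phi V E = {S. assignment V S \<and> (\<forall>e\<in>E. \<exists>v\<in>e. Pos v \<in> S)}"

type_synonym ('n, 'a) bedge = "'n \<times> 'a lit option \<times> 'n"

definition etail :: "('n, 'a) bedge \<Rightarrow> 'n" where "etail e = fst e"
definition elab :: "('n, 'a) bedge \<Rightarrow> 'a lit option" where "elab e = fst (snd e)"
definition ehead :: "('n, 'a) bedge \<Rightarrow> 'n" where "ehead e = snd (snd e)"

fun is_path :: "('n, 'a) bedge set \<Rightarrow> 'n \<Rightarrow> ('n, 'a) bedge list \<Rightarrow> 'n \<Rightarrow> bool" where
  "is_path E v [] w \<longleftrightarrow> v = w"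
| "is_path E v (e # es) w \<longleftrightarrow> e \<in> E \<and> etail e = v \<and> is_path E (ehead e) es w"

definition lits_of :: "('n, 'a) bedge list \<Rightarrow> 'a lit set" where
  "lits_of es = {l. Some l \<in> elab ` set es}"

definition occurs :: "'a \<Rightarrow> ('n, 'a) bedge \<Rightarrow> bool" where
  "occurs x e \<longleftrightarrow> elab e = Some (Pos x) \<or> elab e = Some (Neg x)"

definition nrobp :: "'a set \<Rightarrow> 'n set \<Rightarrow> ('n, 'a) bedge set \<Rightarrow> 'n \<Rightarrow> 'n \<Rightarrow> bool" where
  "nrobp X N E s t \<longleftrightarrow>
     finite N \<and> finite E \<and> (\<forall>e\<in>E. etail e \<in> N \<and> ehead e \<in> N) \<and> s \<in> N \<and> t \<in> N \<and>
     (\<forall>v es. is_path E v es v \<longrightarrow> es = []) \<and>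
     {v\<in>N. \<not> (\<exists>e\<in>E. ehead e = v)} = {s} \<and>
     {v\<in>N. \<not> (\<exists>e\<in>E. etail e = v)} = {t} \<and>
     (\<forall>e\<in>E. \<forall>l. elab e = Some l \<longrightarrow> var l \<in> X) \<and>
     (\<forall>es. is_path E s es t \<longrightarrow>
        (\<forall>x\<in>X. card {i. i < length es \<and> occurs x (es ! i)} = 1))"

definition represents :: "('n, 'a) bedge set \<Rightarrow> 'n \<Rightarrow> 'n \<Rightarrow> 'a lit set set \<Rightarrow> bool" where
  "represents E s t F \<longleftrightarrow> F = {lits_of es | es. is_path E s es t}"

definition located_before :: "('n, 'a) bedge set \<Rightarrow> 'n \<Rightarrow> 'n \<Rightarrow> 'a \<Rightarrow> 'n \<Rightarrow> bool" where
  "located_before E s t x u \<longleftrightarrow>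
     (\<forall>p1 p2. is_path E s p1 u \<and> is_path E u p2 t \<longrightarrow> (\<exists>e\<in>set p1. occurs x e))"

definition located_after :: "('n, 'a) bedge set \<Rightarrow> 'n \<Rightarrow> 'n \<Rightarrow> 'a \<Rightarrow> 'n \<Rightarrow> bool" where
  "located_after E s t x u \<longleftrightarrow>
     (\<forall>p1 p2. is_path E s p1 u \<and> is_path E u p2 t \<longrightarrow> (\<exists>e\<in>set p2. occurs x e))"

definition separated :: "('n, 'a) bedge set \<Rightarrow> 'n \<Rightarrow> 'n \<Rightarrow> 'a set \<Rightarrow> 'a set \<Rightarrow> 'n \<Rightarrow> bool" where
  "separated E s t A B u \<longleftrightarrow>
     ((\<forall>x\<in>A. located_before E s t x u) \<and> (\<forall>y\<in>B. located_after E s t y u)) \<or>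
     ((\<forall>x\<in>B. located_before E s t x u) \<and> (\<forall>y\<in>A. located_after E s t y u))"

end

theory Submission
  imports Defs
begin

text \<open>For an edge \<open>{a, b}\<close> with \<open>a\<close> located before \<open>u\<close> and \<open>b\<close> after \<open>u\<close>, suppose some path
  through \<open>u\<close> sets \<open>a\<close> negatively and another one sets \<open>b\<close> negatively. Splicing the prefix of the
  first with the suffix of the second gives a source-sink path whose assignment falsifies the
  clause \<open>a \<or> b\<close>, contradicting \<open>F \<subseteq> \<phi>(G)\<close>. Hence one endpoint of each matching edge is set
  positively on every path through \<open>u\<close>, and these endpoints form \<open>X\<close>.\<close>

lemma is_path_append:
  "is_path E v (p @ q) w \<longleftrightarrow> (\<exists>m. is_path E v p m \<and> is_path E m q w)"
  by (induction p arbitrary: v) auto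

lemma lits_of_append: "lits_of (p @ q) = lits_of p \<union> lits_of q"
  unfolding lits_of_def by auto

lemma Neg_in_lits_of_if_occurs:
  assumes "e \<in> set p" "occurs a e" "Pos a \<notin> lits_of p"
  shows "Neg a \<in> lits_of p"
  using assms unfolding occurs_def lits_of_def by force

definition pos_through :: "('n, 'a) bedge set \<Rightarrow> 'n \<Rightarrow> 'n \<Rightarrow> 'n \<Rightarrow> 'a \<Rightarrow> bool" where
  "pos_through E s t u v \<longleftrightarrow>
     (\<forall>p1 p2. is_path E s p1 u \<and> is_path E u p2 t \<longrightarrow> Pos v \<in> lits_of (p1 @ p2))"

lemma spliced_path_in_phi:
  assumes "F \<subseteq> phi V GE" "represents E s t F"
    and "is_path E s p1 u" "is_path E u p2 t"
  shows "lits_of (p1 @ p2) \<in> phi V GE"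
proof -
  have "is_path E s (p1 @ p2) t" using assms(3,4) by (auto simp: is_path_append)
  then show ?thesis using assms(1,2) unfolding represents_def by blast
qed

lemma pos_through_edge_endpoint:
  assumes FG: "F \<subseteq> phi V GE" and R: "represents E s t F" and ab: "{a, b} \<in> GE"
    and a_before: "located_before E s t a u" and b_after: "located_after E s t b u"
  shows "pos_through E s t u a \<or> pos_through E s t u b"
proof (rule ccontr)
  assume "\<not> ?thesis"
  then obtain p1 p2 p1' p2' where paths:
      "is_path E s p1 u" "is_path E u p2 t" "is_path E s p1' u" "is_path E u p2' t"
    and not_a: "Pos a \<notin> lits_of (p1 @ p2)" and not_b: "Pos b \<notin> lits_of (p1' @ p2')"
    unfolding pos_through_def by blast
  obtain e where "e \<in> set p1" "occurs a e"
    using a_before paths unfolding located_before_def by blast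
  with not_a have "Neg a \<in> lits_of p1"
    by (intro Neg_in_lits_of_if_occurs) (simp_all add: lits_of_append)
  moreover obtain e' where "e' \<in> set p2'" "occurs b e'"
    using b_after paths unfolding located_after_def by blast
  with not_b have "Neg b \<in> lits_of p2'"
    by (intro Neg_in_lits_of_if_occurs) (simp_all add: lits_of_append)
  ultimately have neg: "Neg a \<in> lits_of (p1 @ p2')" "Neg b \<in> lits_of (p1 @ p2')"
    by (simp_all add: lits_of_append)
  have "lits_of (p1 @ p2') \<in> phi V GE"
    using spliced_path_in_phi[OF FG R paths(1,4)] .
  then have assign: "assignment V (lits_of (p1 @ p2'))"
    and clause: "Pos a \<in> lits_of (p1 @ p2') \<or> Pos b \<in> lits_of (p1 @ p2')"
    using ab unfolding phi_def by auto
  have "a \<in> V" "b \<in> V"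
    using assign neg unfolding assignment_def by force+
  then show False
    using assign neg clause unfolding assignment_def by blast
qed

lemma separated_pair:
  assumes "separated E s t A B u" "a \<in> A" "b \<in> B"
  shows "(located_before E s t a u \<and> located_after E s t b u) \<or>
         (located_before E s t b u \<and> located_after E s t a u)"
  using assms unfolding separated_def by blast

lemma matching_transversal:
  assumes choice: "\<forall>i<q. P (x i) \<or> P (y i)"
    and disjoint: "\<forall>i<q. \<forall>j<q. i \<noteq> j \<longrightarrow> {x i, y i} \<inter> {x j, y j} = {}"
  shows "\<exists>X. X \<subseteq> (\<Union>i<q. {x i, y i}) \<and> card X = q \<and>
             (\<forall>i<q. card (X \<inter> {x i, y i}) = 1) \<and> (\<forall>v\<in>X. P v)"
proof -
  define c where "c i = (if P (x i) then x i else y i)" for i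
  have c_pair: "c i \<in> {x i, y i}" for i unfolding c_def by auto
  have c_unique: "j = i" if "i < q" "j < q" "c j \<in> {x i, y i}" for i j
    using disjoint that c_pair[of j] by blast
  have "inj_on c {..<q}"
    by (rule inj_onI) (metis c_pair c_unique lessThan_iff)
  show ?thesis
  proof (intro exI conjI allI impI ballI)
    show "c ` {..<q} \<subseteq> (\<Union>i<q. {x i, y i})" using c_pair by blast
    show "card (c ` {..<q}) = q" using card_image[OF \<open>inj_on c {..<q}\<close>] by simp
  next
    fix i assume "i < q"
    then have "c ` {..<q} \<inter> {x i, y i} = {c i}" using c_unique c_pair by blast
    then show "card (c ` {..<q} \<inter> {x i, y i}) = 1" by simp
  next
    fix v assume "v \<in> c ` {..<q}"
    then show "P v" using choice unfolding c_def by auto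
  qed
qed

theorem proposition2:
  fixes V :: "'a set" and GE :: "'a set set"
    and N :: "'n set" and E :: "('n, 'a) bedge set" and s t u :: 'n
    and F :: "'a lit set set" and q :: nat and x y :: "nat \<Rightarrow> 'a"
  assumes "graph V GE" and "no_isolated V GE"
    and "F \<subseteq> phi V GE"
    and "nrobp V N E s t" and "represents E s t F"
    and "u \<in> N"
    and "\<forall>i<q. {x i, y i} \<in> GE"
    and "\<forall>i<q. \<forall>j<q. i \<noteq> j \<longrightarrow> {x i, y i} \<inter> {x j, y j} = {}"
    and "separated E s t (x ` {..<q}) (y ` {..<q}) u"
  shows "\<exists>X. X \<subseteq> (\<Union>i<q. {x i, y i}) \<and> card X = q \<and>
             (\<forall>i<q. card (X \<inter> {x i, y i}) = 1) \<and>
             (\<forall>p1 p2. is_path E s p1 u \<and> is_path E u p2 t \<longrightarrow>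
                 (\<forall>v\<in>X. Pos v \<in> lits_of (p1 @ p2)))"
proof -
  have "\<forall>i<q. pos_through E s t u (x i) \<or> pos_through E s t u (y i)"
  proof (intro allI impI)
    fix i assume "i < q"
    then have "{x i, y i} \<in> GE" "{y i, x i} \<in> GE"
      using assms(7) by (auto simp: insert_commute)
    moreover have "(located_before E s t (x i) u \<and> located_after E s t (y i) u) \<or>
                   (located_before E s t (y i) u \<and> located_after E s t (x i) u)"
      using separated_pair[OF assms(9), of "x i" "y i"] \<open>i < q\<close> by simp
    ultimately show "pos_through E s t u (x i) \<or> pos_through E s t u (y i)"
      using pos_through_edge_endpoint[OF assms(3,5)] by blast
  qed
  then obtain X where "X \<subseteq> (\<Union>i<q. {x i, y i})" "card X = q"
      "\<forall>i<q. card (X \<inter> {x i, y i}) = 1" "\<forall>v\<in>X. pos_through E s t u v"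
    using matching_transversal[where P = "pos_through E s t u", OF _ assms(8)] by blast
  then show ?thesis
    unfolding pos_through_def by blast
qed

end
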